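(* Let $G=(V,E)$ be a strongly connected digraph and $s\in V$. For all $v,w\in V$: if $v \leftrightarrow_{\mathrm{2e}} w$ then $T(v)=T(w)$ and $T^R(v)=T^R(w)$.
   Context: For a digraph $G=(V,E)$ and $s\in V$ with every vertex reachable from $s$, $G(s)$ is the flow graph with start vertex $s$; $u$ dominates $w$ if every path from $s$ to $w$ contains $u$; the dominator tree $D(s)$ is the rooted tree on $V$ with root $s$ in which $u$ is an ancestor of $w$ iff $u$ dominates $w$; $d(w)$ is the parent of $w\neq s$. An edge $(u,w)$ is a bridge of $G(s)$ if every path from $s$ to $w$ contains it (then $u=d(w)$). A vertex $w\neq s$ is marked if $(d(w),w)$ is a bridge of $G(s)$. Deleting from $D(s)$ all edges $(d(w),w)$ with $w$ marked decomposes $D(s)$ into a forest of subtrees, each rooted at $s$ or at a marked vertex; $T(v)$ denotes the subtree containing $v$, and $r_v$ its root. $G^R$ is $G$ with all edges reversed; $D^R(s)$ is the dominator tree of $G^R(s)$, marked vertices of $D^R(s)$ are defined via bridges of $G^R(s)$, and $T^R(v)$ is the subtree containing $v$ in the analogous decomposition of $D^R(s)$. For vertices $v,w$, $v \leftrightarrow_{\mathrm{2e}} w$ means $v=w$, or there are two edge-disjoint directed paths from $v$ to $w$ and two from $w$ to $v$. *)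

theory Defs
  imports Main
begin

definition is_path :: "('a \<times> 'a) set \<Rightarrow> 'a list \<Rightarrow> 'a \<Rightarrow> 'a \<Rightarrow> bool" where
  "is_path E xs u w \<longleftrightarrow> xs \<noteq> [] \<and> hd xs = u \<and> last xs = w \<and>
     (\<forall>i. Suc i < length xs \<longrightarrow> (xs ! i, xs ! Suc i) \<in> E)"

definition path_edges :: "'a list \<Rightarrow> ('a \<times> 'a) set" where
  "path_edges xs = set (zip xs (tl xs))"

definition strongly_connected :: "'a set \<Rightarrow> ('a \<times> 'a) set \<Rightarrow> bool" where
  "strongly_connected V E \<longleftrightarrow> (\<forall>u\<in>V. \<forall>v\<in>V. (u, v) \<in> E\<^sup>*)"

definition dominates :: "('a \<times> 'a) set \<Rightarrow> 'a \<Rightarrow> 'a \<Rightarrow> 'a \<Rightarrow> bool" where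
  "dominates E s u w \<longleftrightarrow> (\<forall>xs. is_path E xs s w \<longrightarrow> u \<in> set xs)"

text \<open>Parent d(w) of w \<noteq> s in the dominator tree D(s): the immediate dominator,
  i.e. the proper dominator of w that is dominated by all proper dominators of w.\<close>
definition idom :: "('a \<times> 'a) set \<Rightarrow> 'a \<Rightarrow> 'a \<Rightarrow> 'a" where
  "idom E s w = (THE u. u \<noteq> w \<and> dominates E s u w \<and>
       (\<forall>x. x \<noteq> w \<and> dominates E s x w \<longrightarrow> dominates E s x u))"

definition is_bridge :: "('a \<times> 'a) set \<Rightarrow> 'a \<Rightarrow> 'a \<Rightarrow> 'a \<Rightarrow> bool" where
  "is_bridge E s u w \<longleftrightarrow> (u, w) \<in> E \<and>
     (\<forall>xs. is_path E xs s w \<longrightarrow> (u, w) \<in> path_edges xs)"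

definition marked :: "('a \<times> 'a) set \<Rightarrow> 'a \<Rightarrow> 'a \<Rightarrow> bool" where
  "marked E s w \<longleftrightarrow> w \<noteq> s \<and> is_bridge E s (idom E s w) w"

definition forest_edges :: "'a set \<Rightarrow> ('a \<times> 'a) set \<Rightarrow> 'a \<Rightarrow> ('a \<times> 'a) set" where
  "forest_edges V E s = {(idom E s w, w) | w. w \<in> V \<and> w \<noteq> s \<and> \<not> marked E s w}"

definition subtree :: "'a set \<Rightarrow> ('a \<times> 'a) set \<Rightarrow> 'a \<Rightarrow> 'a \<Rightarrow> 'a set" where
  "subtree V E s v = {u. (v, u) \<in> (forest_edges V E s \<union> (forest_edges V E s)\<inverse>)\<^sup>*}"

definition two_edge_conn :: "('a \<times> 'a) set \<Rightarrow> 'a \<Rightarrow> 'a \<Rightarrow> bool" where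
  "two_edge_conn E v w \<longleftrightarrow> v = w \<or>
     ((\<exists>p q. is_path E p v w \<and> is_path E q v w \<and> path_edges p \<inter> path_edges q = {}) \<and>
      (\<exists>p q. is_path E p w v \<and> is_path E q w v \<and> path_edges p \<inter> path_edges q = {}))"

end

theory Submission imports Defs begin

(* For a vertex x of the flow graph G(s) let bridges x be the set of edges lying
   on every path from s to x.  Two facts drive the theorem:
   (1) If v and w are 2-edge-connected then bridges v = bridges w: an edge avoided by one of
       two edge-disjoint w-v paths can be bypassed on the way to v through w, and symmetrically.
   (2) bridges determines the subtree of the forest obtained from D(s) by cutting the edges
       (d(x),x) with x marked.  Along an uncut edge bridges x = bridges (d x), so climbing
       D(s) from x reaches a root r (r = s or r marked) with bridges r = bridges x; and a root
       is determined by its bridges, since bridges s = {} while a marked r carries its own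
       bridge (d(r),r), whose endpoint r then dominates every vertex with the same bridges. *)

section \<open>Paths\<close>

lemma is_path_iff_successively:
  "is_path E p u w \<longleftrightarrow> p \<noteq> [] \<and> hd p = u \<and> last p = w \<and> successively (\<lambda>x y. (x, y) \<in> E) p"
  unfolding is_path_def successively_conv_nth by blast

lemma is_path_ends: "is_path E p u w \<Longrightarrow> p \<noteq> [] \<and> hd p = u \<and> last p = w"
  unfolding is_path_def by blast

lemma path_edges_Nil [simp]: "path_edges [] = {}"
  and path_edges_singleton [simp]: "path_edges [x] = {}"
  and path_edges_Cons_Cons [simp]: "path_edges (x # y # zs) = insert (x, y) (path_edges (y # zs))"
  by (simp_all add: path_edges_def)

lemma path_edges_append_Cons:
  "path_edges (xs @ a # ys) = path_edges (xs @ [a]) \<union> path_edges (a # ys)"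
  by (induction xs rule: induct_list012) auto

lemma path_edges_endpoints: "(a, b) \<in> path_edges p \<Longrightarrow> a \<in> set p \<and> b \<in> set p"
  by (induction p rule: induct_list012) auto

lemma path_edges_target_Cons: "(a, b) \<in> path_edges (x # ys) \<Longrightarrow> b \<in> set ys"
  by (induction ys arbitrary: x) auto

lemma path_edges_distinct: "distinct p \<Longrightarrow> (a, b) \<in> path_edges p \<Longrightarrow> a \<noteq> b"
  by (induction p rule: induct_list012) auto

lemma path_edges_subset: "is_path E p u w \<Longrightarrow> path_edges p \<subseteq> E"
proof -
  have "successively (\<lambda>x y. (x, y) \<in> E) p \<Longrightarrow> path_edges p \<subseteq> E" for p
    by (induction p rule: induct_list012) auto
  then show "is_path E p u w \<Longrightarrow> path_edges p \<subseteq> E"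
    using is_path_iff_successively by metis
qed

lemma path_edges_rev: "path_edges (rev p) = (path_edges p)\<inverse>"
proof (induction p rule: induct_list012)
  case (3 x y zs)
  have "path_edges (rev (x # y # zs)) = path_edges (rev (y # zs)) \<union> {(y, x)}"
    using path_edges_append_Cons[of "rev zs" y "[x]"] by simp
  then show ?case using 3 by auto
qed auto

lemma path_split:
  "is_path E (xs @ a # ys) u w \<longleftrightarrow> is_path E (xs @ [a]) u a \<and> is_path E (a # ys) a w"
proof -
  have "hd (xs @ a # ys) = hd (xs @ [a])" by (cases xs) simp_all
  moreover have "successively P (xs @ a # ys) \<longleftrightarrow> successively P (xs @ [a]) \<and> successively P (a # ys)"
    for P :: "'a \<Rightarrow> 'a \<Rightarrow> bool"
    using successively_append_iff[of P xs "a # ys"] successively_append_iff[of P xs "[a]"] by auto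
  ultimately show ?thesis unfolding is_path_iff_successively by auto
qed

lemma path_prefix: "is_path E (xs @ a # ys) u w \<Longrightarrow> is_path E (xs @ [a]) u a"
  by (rule conjunct1[OF path_split[THEN iffD1]])

lemma path_suffix: "is_path E (xs @ a # ys) u w \<Longrightarrow> is_path E (a # ys) a w"
  by (rule conjunct2[OF path_split[THEN iffD1]])

lemma path_concat:
  assumes "is_path E q u v" and "is_path E (v # ys) v w"
  shows "is_path E (q @ ys) u w" and "path_edges (q @ ys) = path_edges q \<union> path_edges (v # ys)"
proof -
  have q: "q = butlast q @ [v]"
    using is_path_ends[OF assms(1)] by (metis append_butlast_last_id)
  then have "q @ ys = butlast q @ v # ys" by (metis append.assoc append_Cons append_Nil)
  then show "is_path E (q @ ys) u w" "path_edges (q @ ys) = path_edges q \<union> path_edges (v # ys)"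
    using assms path_split[of E "butlast q" v ys] path_edges_append_Cons[of "butlast q" v ys] q
    by metis+
qed

lemma path_exists: "(u, x) \<in> E\<^sup>* \<Longrightarrow> \<exists>p. is_path E p u x"
proof (induction rule: rtrancl_induct)
  case base
  have "is_path E [u] u u" by (simp add: is_path_def)
  then show ?case by blast
next
  case (step y z)
  then obtain p where "is_path E p u y" by blast
  moreover have "is_path E [y, z] y z" using step by (simp add: is_path_iff_successively)
  ultimately show ?case using path_concat(1)[of E p u y "[z]" z] by blast
qed

lemma simple_path: "is_path E p u w \<Longrightarrow> \<exists>q. is_path E q u w \<and> distinct q"
proof (induction "length p" arbitrary: p rule: less_induct)
  case less
  show ?case
  proof (cases "distinct p")
    case False
    then obtain xs y ys zs where p: "p = xs @ [y] @ ys @ [y] @ zs" using not_distinct_decomp by blast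
    then have "is_path E (xs @ [y]) u y" "is_path E (y # zs) y w"
      using less.prems path_prefix[of E xs y "ys @ y # zs"] path_suffix[of E "xs @ y # ys" y zs]
      by simp_all
    then have "is_path E (xs @ y # zs) u w" using path_split by metis
    moreover have "length (xs @ y # zs) < length p" using p by simp
    ultimately show ?thesis using less.hyps by blast
  qed (use less.prems in blast)
qed

lemma path_in_V: "is_path E p u w \<Longrightarrow> u \<in> V \<Longrightarrow> E \<subseteq> V \<times> V \<Longrightarrow> w \<in> V"
proof (induction p arbitrary: u rule: induct_list012)
  case (3 x y zs)
  then have "is_path E (y # zs) y w" "y \<in> V" by (auto simp: is_path_iff_successively)
  then show ?case using 3 by blast
qed (auto simp: is_path_def)

lemma rev_path: "is_path E p u w \<Longrightarrow> is_path (E\<inverse>) (rev p) w u"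
  by (auto simp: is_path_iff_successively hd_rev last_rev)

section \<open>Dominators\<close>

lemma dominates_refl: "dominates E s u u"
  unfolding dominates_def using is_path_ends last_in_set by metis

text \<open>Dominance is antisymmetric among vertices reachable from s: a simple path to b
  passes through a, and its part up to a would avoid b.\<close>
lemma dominates_antisym:
  assumes ab: "dominates E s a b" and ba: "dominates E s b a" and "is_path E p0 s b"
  shows "a = b"
proof (rule ccontr)
  assume "a \<noteq> b"
  obtain p where p: "is_path E p s b" "distinct p" using simple_path[OF assms(3)] by blast
  then obtain xs ys where p_split: "p = xs @ a # ys"
    using ab unfolding dominates_def by (meson split_list)
  then have "b = last (a # ys)" using is_path_ends[OF p(1)] by simp
  then have "b \<in> set ys" using \<open>a \<noteq> b\<close> by (metis last_ConsL last_ConsR last_in_set)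
  then have "b \<notin> set (xs @ [a])" using p(2) p_split by auto
  moreover have "is_path E (xs @ [a]) s a" using path_prefix p(1) p_split by metis
  ultimately show False using ba unfolding dominates_def by blast
qed

lemma dominates_later_vertex:
  assumes p: "is_path E (xs @ b # ys) s x" "distinct (xs @ b # ys)"
    and "a \<in> set xs" and "dominates E s a x"
  shows "dominates E s a b"
  unfolding dominates_def
proof (intro allI impI)
  fix q assume "is_path E q s b"
  then have "is_path E (q @ ys) s x" using path_concat(1) path_suffix[OF p(1)] by metis
  then have "a \<in> set (q @ ys)" using assms(4) unfolding dominates_def by blast
  moreover have "a \<notin> set ys" using p(2) assms(3) by auto
  ultimately show "a \<in> set q" by auto
qed

text \<open>The immediate dominator of a reachable x \<noteq> s exists and is unique: it is the last
  proper dominator of x on a simple path from s to x.\<close>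
lemma idom_unique_exists:
  assumes "is_path E p0 s x" and "x \<noteq> s"
  shows "\<exists>!u. u \<noteq> x \<and> dominates E s u x \<and> (\<forall>y. y \<noteq> x \<and> dominates E s y x \<longrightarrow> dominates E s y u)"
proof -
  obtain p where p: "is_path E p s x" "distinct p" using simple_path[OF assms(1)] by blast
  define xs where "xs = butlast p"
  have p_xs: "p = xs @ [x]"
    using is_path_ends[OF p(1)] unfolding xs_def by (metis append_butlast_last_id)
  have "hd p = s" using is_path_ends[OF p(1)] by blast
  then have "s \<in> set xs" using p_xs assms(2) by (cases xs) auto
  moreover have "dominates E s s x" unfolding dominates_def using is_path_ends hd_in_set by metis
  ultimately obtain ys u zs where xs: "xs = ys @ u # zs" "dominates E s u x"
      and zs: "\<forall>z\<in>set zs. \<not> dominates E s z x"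
    using split_list_last_prop[of xs "\<lambda>z. dominates E s z x"] by blast
  have p_u: "p = ys @ u # (zs @ [x])" using p_xs xs by simp
  have "u \<noteq> x" using p(2) p_u by auto
  have below_u: "dominates E s y u" if "y \<noteq> x" "dominates E s y x" for y
  proof -
    have "y \<in> set p" using p(1) that(2) unfolding dominates_def by blast
    then have "y \<in> set ys \<or> y = u" using p_u that zs by auto
    then show ?thesis using dominates_later_vertex[of E ys u "zs @ [x]" s x y] p p_u that(2)
      by (auto simp: dominates_refl)
  qed
  show ?thesis
  proof (rule ex1I[of _ u])
    fix u' assume u': "u' \<noteq> x \<and> dominates E s u' x \<and> (\<forall>y. y \<noteq> x \<and> dominates E s y x \<longrightarrow> dominates E s y u')"
    have "dominates E s u' u" using below_u u' by blast
    moreover have "dominates E s u u'" using u' \<open>u \<noteq> x\<close> xs(2) by blast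
    moreover have "is_path E (ys @ [u]) s u" using path_prefix p(1) p_u by metis
    ultimately show "u' = u" by (rule dominates_antisym)
  qed (use \<open>u \<noteq> x\<close> xs(2) below_u in blast)
qed

lemma idom_props:
  assumes "is_path E p0 s x" and "x \<noteq> s"
  shows "idom E s x \<noteq> x" and "dominates E s (idom E s x) x"
    and "\<And>y. y \<noteq> x \<Longrightarrow> dominates E s y x \<Longrightarrow> dominates E s y (idom E s x)"
  using theI'[OF idom_unique_exists[OF assms]] unfolding idom_def by blast+

text \<open>Between d(x) and x, a simple path meets no further dominator of x: such a vertex
  would dominate d(x) and be dominated by it.\<close>
lemma no_dominator_after_idom:
  assumes p: "is_path E (xs @ idom E s x # ys) s x" "distinct (xs @ idom E s x # ys)"
    and "x \<noteq> s" and "y \<in> set ys" and "y \<noteq> x"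
  shows "\<not> dominates E s y x"
proof
  assume y_dom: "dominates E s y x"
  let ?d = "idom E s x"
  obtain ys1 ys2 where ys: "ys = ys1 @ y # ys2" using assms(4) by (meson split_list)
  have p': "is_path E ((xs @ ?d # ys1) @ y # ys2) s x" "distinct ((xs @ ?d # ys1) @ y # ys2)"
    using p ys by simp_all
  have "dominates E s ?d y"
    using dominates_later_vertex[OF p'] idom_props(2)[OF p(1) assms(3)] by simp
  moreover have "dominates E s y ?d" using idom_props(3)[OF p(1) assms(3) assms(5) y_dom] .
  moreover have "is_path E ((xs @ ?d # ys1) @ [y]) s y" using path_prefix[OF p'(1)] .
  ultimately have "y = ?d" using dominates_antisym by metis
  then show False using p(2) assms(4) by simp
qed

section \<open>Bridge sets\<close>

text \<open>The edges lying on every path from s to x; the bridges of G(s) entering x are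
  (for reachable x) exactly the edges of this set that end in x.\<close>
definition bridges :: "('a \<times> 'a) set \<Rightarrow> 'a \<Rightarrow> 'a \<Rightarrow> ('a \<times> 'a) set" where
  "bridges E s x = {e. \<forall>p. is_path E p s x \<longrightarrow> e \<in> path_edges p}"

lemma bridges_start: "bridges E s s = {}"
proof -
  have "is_path E [s] s s" by (simp add: is_path_def)
  then show ?thesis unfolding bridges_def by fastforce
qed

lemma bridge_endpoints_dominate:
  assumes "(a, b) \<in> bridges E s x"
  shows "dominates E s a x" and "dominates E s b x"
proof -
  have "a \<in> set p \<and> b \<in> set p" if "is_path E p s x" for p
  proof -
    have "(a, b) \<in> path_edges p" using assms that unfolding bridges_def by simp
    then show ?thesis by (rule path_edges_endpoints)
  qed
  then show "dominates E s a x" "dominates E s b x" unfolding dominates_def by simp_all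
qed

lemma bridges_mono:
  assumes "dominates E s u x"
  shows "bridges E s u \<subseteq> bridges E s x"
proof
  fix e assume e: "e \<in> bridges E s u"
  show "e \<in> bridges E s x" unfolding bridges_def
  proof (intro CollectI allI impI)
    fix p assume p: "is_path E p s x"
    then obtain xs ys where p_split: "p = xs @ u # ys"
      using assms unfolding dominates_def by (meson split_list)
    then have "is_path E (xs @ [u]) s u" using p path_prefix by metis
    then have "e \<in> path_edges (xs @ [u])" using e unfolding bridges_def by blast
    then show "e \<in> path_edges p" using p_split path_edges_append_Cons[of xs u ys] by auto
  qed
qed

text \<open>Conversely, x has at most one bridge more than d(x), namely (d(x),x): any other
  bridge would have an endpoint strictly between d(x) and x dominating x.\<close>
lemma bridges_idom_step:
  assumes "is_path E p0 s x" and "x \<noteq> s"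
  shows "bridges E s x \<subseteq> insert (idom E s x, x) (bridges E s (idom E s x))"
proof
  fix e assume e: "e \<in> bridges E s x"
  let ?d = "idom E s x"
  obtain a b where e_ab: "e = (a, b)" by fastforce
  obtain p where p: "is_path E p s x" "distinct p" using simple_path[OF assms(1)] by blast
  then obtain xs ys where p_split: "p = xs @ ?d # ys"
    using idom_props(2)[OF assms] unfolding dominates_def by (meson split_list)
  have tail: "is_path E (?d # ys) ?d x" using path_suffix p(1) p_split by metis
  have "e \<notin> path_edges (?d # ys)" if not_last: "e \<noteq> (?d, x)"
  proof
    assume e_tail: "e \<in> path_edges (?d # ys)"
    have distinct_tail: "distinct (?d # ys)" using p(2) p_split by simp
    have "a \<in> set (?d # ys)" "b \<in> set ys"
      using path_edges_endpoints path_edges_target_Cons e_tail e_ab by metis+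
    moreover have "a \<noteq> b" using path_edges_distinct[OF distinct_tail] e_tail e_ab by blast
    ultimately obtain y where y: "y \<in> set ys" "y \<noteq> x" "y = a \<or> y = b"
      using not_last e_ab by auto
    then have "dominates E s y x" using bridge_endpoints_dominate e unfolding e_ab by metis
    moreover have "\<not> dominates E s y x"
      using no_dominator_after_idom[of E xs s x ys] p p_split assms(2) y(1,2) by simp
    ultimately show False by contradiction
  qed
  moreover have "e \<in> path_edges q" if "is_path E q s ?d" "e \<notin> path_edges (?d # ys)" for q
    using path_concat[OF that(1) tail] e that(2) unfolding bridges_def by blast
  ultimately show "e \<in> insert (?d, x) (bridges E s ?d)"
    unfolding bridges_def by blast
qed

lemma marked_iff_bridge:
  assumes "is_path E p0 s x"
  shows "marked E s x \<longleftrightarrow> x \<noteq> s \<and> (idom E s x, x) \<in> bridges E s x"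
  using path_edges_subset[OF assms] assms
  unfolding marked_def is_bridge_def bridges_def by blast

lemma bridges_unmarked:
  assumes "is_path E p0 s x" and "x \<noteq> s" and "\<not> marked E s x"
  shows "bridges E s x = bridges E s (idom E s x)"
  using bridges_mono[OF idom_props(2)[OF assms(1,2)]] bridges_idom_step[OF assms(1,2)]
    marked_iff_bridge[OF assms(1)] assms(2,3) by blast

section \<open>Roots of the forest\<close>

definition forest_link :: "'a set \<Rightarrow> ('a \<times> 'a) set \<Rightarrow> 'a \<Rightarrow> ('a \<times> 'a) set" where
  "forest_link V E s = forest_edges V E s \<union> (forest_edges V E s)\<inverse>"

text \<open>The induction is on the
  length of a path to x, since d(x) is reached by a proper prefix of it.\<close>
lemma forest_root:
  assumes EV: "E \<subseteq> V \<times> V" and sV: "s \<in> V"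
  shows "is_path E p s x \<Longrightarrow> \<exists>r. (x, r) \<in> (forest_link V E s)\<^sup>* \<and> bridges E s r = bridges E s x
            \<and> (r = s \<or> marked E s r) \<and> (\<exists>q. is_path E q s r)"
proof (induction "length p" arbitrary: p x rule: less_induct)
  case less
  show ?case
  proof (cases "x = s \<or> marked E s x")
    case False
    let ?d = "idom E s x"
    have x: "x \<noteq> s" "\<not> marked E s x" using False by auto
    have "x \<in> V" using path_in_V[OF less.prems sV EV] .
    then have "(x, ?d) \<in> forest_link V E s"
      unfolding forest_link_def forest_edges_def using x by blast
    obtain xs ys where p_split: "p = xs @ ?d # ys"
      using idom_props(2)[OF less.prems x(1)] less.prems unfolding dominates_def
      by (meson split_list)
    have "ys \<noteq> []"
      using is_path_ends[OF less.prems] idom_props(1)[OF less.prems x(1)] p_split by auto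
    then have "length (xs @ [?d]) < length p" using p_split by simp
    moreover have "is_path E (xs @ [?d]) s ?d" using path_prefix less.prems p_split by metis
    ultimately obtain r where "(?d, r) \<in> (forest_link V E s)\<^sup>*" "bridges E s r = bridges E s ?d"
      "r = s \<or> marked E s r" "\<exists>q. is_path E q s r"
      using less.hyps by blast
    then show ?thesis
      using \<open>(x, ?d) \<in> forest_link V E s\<close> bridges_unmarked[OF less.prems x]
      by (metis converse_rtrancl_into_rtrancl)
  qed (use less.prems in blast)
qed

text \<open>A marked vertex r dominates every vertex with the same bridges, since its own bridge
  (d(r),r) lies on all paths to that vertex.\<close>
lemma marked_dominates_same_bridges:
  assumes "marked E s r" and "bridges E s r = bridges E s y"
  shows "dominates E s r y"
proof -
  have "(idom E s r, r) \<in> bridges E s r"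
    using assms(1) unfolding marked_def is_bridge_def bridges_def by blast
  then show ?thesis using assms(2) bridge_endpoints_dominate(2) by metis
qed

lemma root_unique:
  assumes "is_path E p1 s r1" and "is_path E p2 s r2"
    and "r1 = s \<or> marked E s r1" and "r2 = s \<or> marked E s r2"
    and same: "bridges E s r1 = bridges E s r2"
  shows "r1 = r2"
proof -
  have no_bridges: "bridges E s r = {} \<Longrightarrow> is_path E p s r \<Longrightarrow> \<not> marked E s r" for r p
    using marked_iff_bridge by fastforce
  consider "r1 = s" | "r2 = s" | "marked E s r1" "marked E s r2" using assms(3,4) by blast
  then show ?thesis
  proof cases
    case 1
    then show ?thesis using same bridges_start no_bridges[OF _ assms(2)] assms(4) by metis
  next
    case 2
    then show ?thesis using same bridges_start no_bridges[OF _ assms(1)] assms(3) by metis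
  next
    case 3
    then show ?thesis
      using marked_dominates_same_bridges same dominates_antisym assms(2) by metis
  qed
qed

lemma subtree_eq_if_same_bridges:
  assumes EV: "E \<subseteq> V \<times> V" and sV: "s \<in> V"
    and "is_path E pv s v" and "is_path E pw s w"
    and "bridges E s v = bridges E s w"
  shows "subtree V E s v = subtree V E s w"
proof -
  let ?R = "(forest_link V E s)\<^sup>*"
  obtain r1 q1 where r1: "(v, r1) \<in> ?R" "bridges E s r1 = bridges E s v"
      "r1 = s \<or> marked E s r1" "is_path E q1 s r1"
    using forest_root[OF EV sV assms(3)] by blast
  obtain r2 q2 where r2: "(w, r2) \<in> ?R" "bridges E s r2 = bridges E s w"
      "r2 = s \<or> marked E s r2" "is_path E q2 s r2"
    using forest_root[OF EV sV assms(4)] by blast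
  have "r1 = r2" using root_unique[OF r1(4) r2(4) r1(3) r2(3)] r1(2) r2(2) assms(5) by simp
  have "sym ?R" unfolding forest_link_def by (simp add: sym_Un_converse sym_rtrancl)
  then have "(v, w) \<in> ?R" "(w, v) \<in> ?R"
    using r1(1) r2(1) \<open>r1 = r2\<close> by (meson rtrancl_trans symD)+
  then show ?thesis
    unfolding subtree_def forest_link_def[symmetric] by (meson rtrancl_trans)
qed

section \<open>2-edge-connectivity\<close>

text \<open>An edge on all paths to v that one of two edge-disjoint w-v paths avoids must lie on
  every path to w, because it can be bypassed by going to w first.\<close>
lemma bridges_disjoint_paths:
  assumes p1: "is_path E p1 w v" and p2: "is_path E p2 w v"
    and disjoint: "path_edges p1 \<inter> path_edges p2 = {}"
  shows "bridges E s v \<subseteq> bridges E s w"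
proof
  fix e assume e: "e \<in> bridges E s v"
  have via: "e \<in> path_edges q" if q: "is_path E q s w" and p: "is_path E p w v" "e \<notin> path_edges p"
    for p q
  proof -
    have "p = w # tl p" using is_path_ends[OF p(1)] by (metis list.collapse)
    then have tail: "is_path E (w # tl p) w v" using p(1) by simp
    have "e \<in> path_edges (q @ tl p)"
      using path_concat(1)[OF q tail] e unfolding bridges_def by blast
    moreover have "path_edges (q @ tl p) = path_edges q \<union> path_edges p"
      using path_concat(2)[OF q tail] \<open>p = w # tl p\<close> by simp
    ultimately show ?thesis using p(2) by blast
  qed
  show "e \<in> bridges E s w" unfolding bridges_def
  proof (intro CollectI allI impI)
    fix q assume q: "is_path E q s w"
    show "e \<in> path_edges q"
    proof (cases "e \<in> path_edges p1")
      case True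
      then have "e \<notin> path_edges p2" using disjoint by blast
      then show ?thesis using via[OF q p2] by blast
    qed (use via[OF q p1] in blast)
  qed
qed

lemma bridges_two_edge_conn:
  assumes "two_edge_conn E v w"
  shows "bridges E s v = bridges E s w"
proof (cases "v = w")
  case False
  then obtain p q p' q' where
      vw: "is_path E p v w" "is_path E q v w" "path_edges p \<inter> path_edges q = {}" and
      wv: "is_path E p' w v" "is_path E q' w v" "path_edges p' \<inter> path_edges q' = {}"
    using assms unfolding two_edge_conn_def by blast
  show ?thesis
    using bridges_disjoint_paths[OF wv] bridges_disjoint_paths[OF vw] by (rule subset_antisym)
qed simp

lemma two_edge_conn_converse:
  assumes "two_edge_conn E v w"
  shows "two_edge_conn (E\<inverse>) v w"
proof -
  have rev_pair: "\<exists>p q. is_path (E\<inverse>) p u x \<and> is_path (E\<inverse>) q u x \<and> path_edges p \<inter> path_edges q = {}"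
    if "is_path E p x u" "is_path E q x u" "path_edges p \<inter> path_edges q = {}" for p q u x
  proof -
    have "path_edges (rev p) \<inter> path_edges (rev q) = {}"
      using that(3) by (auto simp: path_edges_rev)
    then show ?thesis using rev_path[OF that(1)] rev_path[OF that(2)] by blast
  qed
  show ?thesis
  proof (cases "v = w")
    case False
    then obtain p q p' q' where
        "is_path E p v w" "is_path E q v w" "path_edges p \<inter> path_edges q = {}"
        "is_path E p' w v" "is_path E q' w v" "path_edges p' \<inter> path_edges q' = {}"
      using assms unfolding two_edge_conn_def by blast
    then show ?thesis using rev_pair[of p' w v q'] rev_pair[of p v w q]
      unfolding two_edge_conn_def by blast
  qed (simp add: two_edge_conn_def)
qed

theorem mainTheorem5:
  fixes V :: "'a set" and E :: "('a \<times> 'a) set" and s :: 'a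
  assumes "finite V" and "E \<subseteq> V \<times> V" and "s \<in> V"
    and "strongly_connected V E"
  shows "\<forall>v\<in>V. \<forall>w\<in>V. two_edge_conn E v w \<longrightarrow>
           subtree V E s v = subtree V E s w \<and>
           subtree V (E\<inverse>) s v = subtree V (E\<inverse>) s w"
proof (intro ballI impI conjI)
  fix v w assume "v \<in> V" "w \<in> V" and vw: "two_edge_conn E v w"
  have reach: "(s, x) \<in> E\<^sup>* \<and> (s, x) \<in> (E\<inverse>)\<^sup>*" if "x \<in> V" for x
    using assms(3,4) that unfolding strongly_connected_def by (auto simp: rtrancl_converse)
  obtain pv pv' where v_paths: "is_path E pv s v" "is_path (E\<inverse>) pv' s v"
    using reach[OF \<open>v \<in> V\<close>] path_exists by metis
  obtain pw pw' where w_paths: "is_path E pw s w" "is_path (E\<inverse>) pw' s w"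
    using reach[OF \<open>w \<in> V\<close>] path_exists by metis
  have "E\<inverse> \<subseteq> V \<times> V" using assms(2) by blast
  show "subtree V E s v = subtree V E s w"
    using subtree_eq_if_same_bridges[OF assms(2,3) v_paths(1) w_paths(1) bridges_two_edge_conn[OF vw]] .
  show "subtree V (E\<inverse>) s v = subtree V (E\<inverse>) s w"
    using subtree_eq_if_same_bridges[OF \<open>E\<inverse> \<subseteq> V \<times> V\<close> assms(3) v_paths(2) w_paths(2)
        bridges_two_edge_conn[OF two_edge_conn_converse[OF vw]]] .
qed

end
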